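(* Consider the following model. Let $\pi_0\in(0,1)$ and $\sigma\in(0,0.25]$. Let $\psi:[0,1]\to\mathbb{R}$ be non-decreasing with $\psi(0)<\psi(1)$. Define $$\pi_1(1)=\frac{(1+4\sigma)\pi_0}{1+4\sigma\pi_0},\qquad \pi_1(0)=\frac{(1-4\sigma)\pi_0}{1-4\sigma\pi_0},$$ $$\Psi(\sigma,\pi_0)=(0.5+2\sigma\pi_0)\,\psi(\pi_1(1))+(0.5-2\sigma\pi_0)\,\psi(\pi_1(0)),$$ $\Phi(S,\sigma,\pi_0)=0.5+\psi(\pi_0)$ and $\Phi(C,\sigma,\pi_0)=0.5+2\sigma\pi_0+\Psi(\sigma,\pi_0)$. The expert chooses the complex rule $C$ if $\Phi(C,\sigma,\pi_0)\ge\Phi(S,\sigma,\pi_0)$ and the simple rule $S$ otherwise. If $\psi$ is linear or convex, then the expert chooses the complex rule.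
   Context: Interpretation: $\pi_0$ is the common prior probability that the expert is competent; $\pi_1(Y)$ is the posterior after the complex rule leads to the correct ($Y=1$) or incorrect ($Y=0$) action, where $\Pr(Y=1)=0.5+2\sigma\pi_0$ under the complex rule; under the simple rule the posterior is $\pi_0$ and the probability of the correct action is $0.5$. $\psi$ is the expert's reputation payoff as a function of the posterior; $\Phi(r,\sigma,\pi_0)$ is the expected total (accuracy plus reputation) payoff from rule $r$. *)

theory Defs
  imports "HOL-Analysis.Analysis"
begin

text \<open>Posterior after complex rule gives correct (Y=1) or incorrect (Y=0) action.\<close>
definition pi1 :: "real \<Rightarrow> real \<Rightarrow> bool \<Rightarrow> real" where
  "pi1 \<sigma> \<pi>0 y = (if y then (1 + 4*\<sigma>) * \<pi>0 / (1 + 4*\<sigma>*\<pi>0)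
                          else (1 - 4*\<sigma>) * \<pi>0 / (1 - 4*\<sigma>*\<pi>0))"

definition Psi :: "(real \<Rightarrow> real) \<Rightarrow> real \<Rightarrow> real \<Rightarrow> real" where
  "Psi \<psi> \<sigma> \<pi>0 = (1/2 + 2*\<sigma>*\<pi>0) * \<psi> (pi1 \<sigma> \<pi>0 True)
                    + (1/2 - 2*\<sigma>*\<pi>0) * \<psi> (pi1 \<sigma> \<pi>0 False)"

datatype rule = S | C

definition Phi :: "(real \<Rightarrow> real) \<Rightarrow> rule \<Rightarrow> real \<Rightarrow> real \<Rightarrow> real" where
  "Phi \<psi> r \<sigma> \<pi>0 = (case r of
      S \<Rightarrow> 1/2 + \<psi> \<pi>0
    | C \<Rightarrow> 1/2 + 2*\<sigma>*\<pi>0 + Psi \<psi> \<sigma> \<pi>0)"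

definition choice :: "(real \<Rightarrow> real) \<Rightarrow> real \<Rightarrow> real \<Rightarrow> rule" where
  "choice \<psi> \<sigma> \<pi>0 = (if Phi \<psi> C \<sigma> \<pi>0 \<ge> Phi \<psi> S \<sigma> \<pi>0 then C else S)"

definition linear_on01 :: "(real \<Rightarrow> real) \<Rightarrow> bool" where
  "linear_on01 \<psi> \<longleftrightarrow> (\<exists>a b. \<forall>x\<in>{0..1}. \<psi> x = a * x + b)"

end

theory Submission
  imports Defs
begin

text \<open>The two posteriors average back to the prior under the outcome probabilities of the
  complex rule (Bayes plausibility), so by Jensen's inequality a convex reputation payoff
  gains in expectation: \<open>\<Psi>(\<sigma>, \<pi>\<^sub>0) \<ge> \<psi>(\<pi>\<^sub>0)\<close>. On top of this the complex rule raises the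
  accuracy from \<open>1/2\<close> to \<open>1/2 + 2\<sigma>\<pi>\<^sub>0\<close>. An affine \<open>\<psi>\<close> is in particular convex.\<close>

lemma linear_on01_imp_convex_on:
  assumes "linear_on01 \<psi>"
  shows "convex_on {0..1} \<psi>"
proof -
  obtain a b where affine: "\<And>x. x \<in> {0..1} \<Longrightarrow> \<psi> x = a * x + b"
    using assms unfolding linear_on01_def by blast
  show ?thesis
  proof (rule convex_onI)
    fix t x y :: real
    assume "0 < t" "t < 1" "x \<in> {0..1}" "y \<in> {0..1}"
    moreover have "(1 - t) * x + t * y \<in> {0..1}"
      using calculation convex_real_interval(5)[of 0 1] unfolding convex_alt by simp
    ultimately show "\<psi> ((1 - t) *\<^sub>R x + t *\<^sub>R y) \<le> (1 - t) * \<psi> x + t * \<psi> y"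
      by (simp add: affine algebra_simps)
  qed simp
qed

lemma pi1_in_unit_interval:
  assumes "0 \<le> \<pi>0" "\<pi>0 < 1" "0 \<le> \<sigma>" "\<sigma> \<le> 1/4"
  shows "pi1 \<sigma> \<pi>0 y \<in> {0..1}"
proof -
  have "0 \<le> \<sigma> * \<pi>0" "\<sigma> * \<pi>0 \<le> \<pi>0 / 4"
    using assms mult_right_mono[of \<sigma> "1/4" \<pi>0] by simp_all
  then have "0 < 1 - 4*\<sigma>*\<pi>0" "0 < 1 + 4*\<sigma>*\<pi>0"
    "0 \<le> (1 - 4*\<sigma>) * \<pi>0" "0 \<le> (1 + 4*\<sigma>) * \<pi>0"
    "(1 - 4*\<sigma>) * \<pi>0 \<le> 1 - 4*\<sigma>*\<pi>0" "(1 + 4*\<sigma>) * \<pi>0 \<le> 1 + 4*\<sigma>*\<pi>0"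
    using assms unfolding left_diff_distrib distrib_right mult.assoc by linarith+
  then show ?thesis
    unfolding pi1_def by (auto intro: divide_nonneg_pos simp: divide_le_eq_1_pos)
qed

lemma pi1_bayes_plausible:
  assumes "1 - 4*\<sigma>*\<pi>0 \<noteq> 0" "1 + 4*\<sigma>*\<pi>0 \<noteq> 0"
  shows "(1/2 - 2*\<sigma>*\<pi>0) * pi1 \<sigma> \<pi>0 False + (1/2 + 2*\<sigma>*\<pi>0) * pi1 \<sigma> \<pi>0 True = \<pi>0"
proof -
  have "(1/2 - 2*\<sigma>*\<pi>0) * pi1 \<sigma> \<pi>0 False = (1 - 4*\<sigma>) * \<pi>0 / 2"
    using assms(1) by (simp add: pi1_def field_simps)
  moreover have "(1/2 + 2*\<sigma>*\<pi>0) * pi1 \<sigma> \<pi>0 True = (1 + 4*\<sigma>) * \<pi>0 / 2"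
    using assms(2) by (simp add: pi1_def field_simps)
  ultimately show ?thesis
    by (simp add: field_simps)
qed

lemma convex_on_imp_le_Psi:
  assumes "convex_on {0..1} \<psi>"
    and "0 \<le> \<pi>0" "\<pi>0 < 1" "0 \<le> \<sigma>" "\<sigma> \<le> 1/4"
  shows "\<psi> \<pi>0 \<le> Psi \<psi> \<sigma> \<pi>0"
proof -
  define t where "t = 1/2 + 2*\<sigma>*\<pi>0"
  have "0 \<le> \<sigma> * \<pi>0" "\<sigma> * \<pi>0 < 1/4"
    using assms mult_right_mono[of \<sigma> "1/4" \<pi>0] by simp_all
  then have t: "0 \<le> t" "t \<le> 1" and "1 - 4*\<sigma>*\<pi>0 \<noteq> 0" "1 + 4*\<sigma>*\<pi>0 \<noteq> 0"
    unfolding t_def mult.assoc by linarith+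
  then have "\<pi>0 = (1 - t) * pi1 \<sigma> \<pi>0 False + t * pi1 \<sigma> \<pi>0 True"
    using pi1_bayes_plausible unfolding t_def by simp
  also have "\<psi> \<dots> \<le> (1 - t) * \<psi> (pi1 \<sigma> \<pi>0 False) + t * \<psi> (pi1 \<sigma> \<pi>0 True)"
    using convex_onD[OF assms(1) t] pi1_in_unit_interval[OF assms(2-5)] by simp
  also have "\<dots> = Psi \<psi> \<sigma> \<pi>0"
    unfolding Psi_def t_def by simp
  finally show ?thesis .
qed

theorem corollary1:
  fixes \<psi> :: "real \<Rightarrow> real" and \<sigma> \<pi>0 :: real
  assumes "0 < \<pi>0" "\<pi>0 < 1"
    and "0 < \<sigma>" "\<sigma> \<le> 1/4"
    and "mono_on {0..1} \<psi>" and "\<psi> 0 < \<psi> 1"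
    and "linear_on01 \<psi> \<or> convex_on {0..1} \<psi>"
  shows "choice \<psi> \<sigma> \<pi>0 = C"
proof -
  have "convex_on {0..1} \<psi>"
    using assms(7) linear_on01_imp_convex_on by blast
  then have "\<psi> \<pi>0 \<le> Psi \<psi> \<sigma> \<pi>0"
    using convex_on_imp_le_Psi assms(1-4) by simp
  moreover have "0 < \<sigma> * \<pi>0"
    using assms(1,3) by simp
  ultimately show ?thesis
    by (simp add: choice_def Phi_def)
qed

end
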